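(* Let $d\ge 1$ and $1\le n\le m$ be integers, and let $P_m$ denote the set of all $m$-outcome POVMs $\mathcal{M}=\{M_b\}_{b=1}^m$ on $\mathbb{C}^d$. Let $F\subseteq P_m$ be the set of $m$-outcome POVMs that can be simulated by $n$-outcome POVMs, i.e. those $\mathcal{O}=\{O_b\}$ of the form $O_b=\sum_{a,x}p(x)\,p(b|a,x)\,Q_{a|x}$, where for each $x$ the family $\{Q_{a|x}\}_{a=1}^n$ is an $n$-outcome POVM, $p(x)$ is a probability distribution and $p(b|a,x)$ are conditional probabilities. For $\mathcal{M}\in P_m$ define the robustness $$R_F(\mathcal{M})=\min\Big\{t\ge 0 \;\Big|\; \exists\,\mathcal{N}=\{N_b\}\in P_m:\ \Big\{\tfrac{M_b+tN_b}{1+t}\Big\}_b\in F\Big\}.$$ Then $$\max_{\mathcal{M}\in P_m}\big(1+R_F(\mathcal{M})\big)\le \frac{m}{n},$$ and this inequality holds with equality when $d\ge m$.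
   Context: A POVM with $k$ outcomes on $\mathbb{C}^d$ is a family of $k$ positive semidefinite operators summing to the identity. *)

theory Defs
  imports "HOL-Analysis.Analysis"
begin

text \<open>Operators on \<open>\<complex>^d\<close> are represented as matrices \<open>complex^'d^'d\<close>;
  the dimension is \<open>d = CARD('d)\<close>.\<close>

definition hermitian_op :: "complex^'d^'d \<Rightarrow> bool" where
  "hermitian_op A \<longleftrightarrow> (\<forall>i j. A $ i $ j = cnj (A $ j $ i))"

definition quad_form :: "complex^'d^'d \<Rightarrow> complex^'d \<Rightarrow> complex" where
  "quad_form A v = (\<Sum>i\<in>UNIV. cnj (v $ i) * (A *v v) $ i)"

definition psd :: "complex^'d^'d \<Rightarrow> bool" where
  "psd A \<longleftrightarrow> hermitian_op A \<and>
     (\<forall>v. Im (quad_form A v) = 0 \<and> 0 \<le> Re (quad_form A v))"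

text \<open>A POVM with \<open>k\<close> outcomes, indexed by \<open>0..<k\<close>.\<close>
definition povm :: "nat \<Rightarrow> (nat \<Rightarrow> complex^'d^'d) \<Rightarrow> bool" where
  "povm k M \<longleftrightarrow> (\<forall>b<k. psd (M b)) \<and> (\<Sum>b<k. M b) = mat 1"

text \<open>The set \<open>F\<close>: \<open>m\<close>-outcome POVMs simulable by \<open>n\<close>-outcome POVMs,
  \<open>O_b = \<Sum>_{a,x} p(x) p(b|a,x) Q_{a|x}\<close>, with \<open>x\<close> ranging over a finite set \<open>{0..<K}\<close>.\<close>
definition simulable :: "nat \<Rightarrow> nat \<Rightarrow> (nat \<Rightarrow> complex^'d^'d) \<Rightarrow> bool" where
  "simulable n m Ob \<longleftrightarrow> povm m Ob \<and>
     (\<exists>(K::nat) (p::nat \<Rightarrow> real) (q::nat \<Rightarrow> nat \<Rightarrow> nat \<Rightarrow> real) (Q::nat \<Rightarrow> nat \<Rightarrow> complex^'d^'d).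
        (\<forall>x<K. 0 \<le> p x) \<and> (\<Sum>x<K. p x) = 1 \<and>
        (\<forall>x<K. povm n (Q x)) \<and>
        (\<forall>x<K. \<forall>a<n. (\<forall>b<m. 0 \<le> q b a x) \<and> (\<Sum>b<m. q b a x) = 1) \<and>
        (\<forall>b<m. Ob b = (\<Sum>x<K. \<Sum>a<n. (p x * q b a x) *\<^sub>R Q x a)))"

text \<open>Robustness \<open>R_F(M) = min {t \<ge> 0 | \<exists>N \<in> P_m. {(M_b + t N_b)/(1+t)} \<in> F}\<close>
  (rendered as an infimum).\<close>
definition robustness :: "nat \<Rightarrow> nat \<Rightarrow> (nat \<Rightarrow> complex^'d^'d) \<Rightarrow> real" where
  "robustness n m M = Inf {t. 0 \<le> t \<and> (\<exists>N. povm m N \<and>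
       simulable n m (\<lambda>b. (1 / (1 + t)) *\<^sub>R (M b + t *\<^sub>R N b)))}"

end

(* Upper bound: pick x uniformly from Z_m and measure the n-outcome coarse-graining of M that
   keeps the outcomes x, ..., x + n - 1 (mod m) and merges the other m - n outcomes into the
   outcome x.  Relabelling the a-th outcome as x + a gives the POVM (n M_b + Sum_{j=n}^{m-1}
   M_{b+j}) / m, i.e. M mixed with weight n/m with an average of m - n cyclic shifts of M, so
   R_F(M) <= m/n - 1.

   Lower bound: for a simulable POVM O and any basis vectors e_b, Sum_b <e_b|O_b|e_b> <= n,
   because every Q_{a|x} has diagonal entries at most 1.  If d >= m, take M diagonal in the
   standard basis with <e_b|M_b|e_b> = 1 for distinct e_b; then O = (M + t N)/(1 + t) has
   Sum_b <e_b|O_b|e_b> >= m/(1 + t), so every feasible t satisfies 1 + t >= m/n. *)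

theory Submission
  imports Defs
begin

lemma quad_form_axis: "quad_form A (axis i 1) = A $ i $ i"
  by (simp add: quad_form_def matrix_vector_mult_def axis_def if_distrib if_distribR cong: if_cong)

lemma quad_form_add: "quad_form (A + B) v = quad_form A v + quad_form B v"
  by (simp add: quad_form_def matrix_vector_mult_def distrib_left distrib_right sum.distrib)

lemma quad_form_scaleR: "quad_form (c *\<^sub>R A) v = of_real c * quad_form A v"
  unfolding quad_form_def matrix_vector_mult_def vector_scaleR_component
  by (simp add: scaleR_conv_of_real sum_distrib_left mult_ac)

lemma psd_zero: "psd 0"
  by (simp add: psd_def hermitian_op_def quad_form_def matrix_vector_mult_def)

lemma hermitian_op_add: "hermitian_op A \<Longrightarrow> hermitian_op B \<Longrightarrow> hermitian_op (A + B)"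
  unfolding hermitian_op_def by (metis complex_cnj_add vector_add_component)

lemma hermitian_op_scaleR: "hermitian_op A \<Longrightarrow> hermitian_op (c *\<^sub>R A)"
  unfolding hermitian_op_def by (metis complex_cnj_scaleR vector_scaleR_component)

lemma psd_add: "psd A \<Longrightarrow> psd B \<Longrightarrow> psd (A + B)"
  by (simp add: psd_def hermitian_op_add quad_form_add)

lemma psd_scaleR: "psd A \<Longrightarrow> 0 \<le> c \<Longrightarrow> psd (c *\<^sub>R A)"
  by (simp add: psd_def hermitian_op_scaleR quad_form_scaleR)

lemma psd_sum: "(\<And>x. x \<in> S \<Longrightarrow> psd (f x)) \<Longrightarrow> psd (\<Sum>x\<in>S. f x)"
  by (induction S rule: infinite_finite_induct) (simp_all add: psd_zero psd_add)

lemma psd_diag_nonneg: "psd A \<Longrightarrow> 0 \<le> Re (A $ i $ i)"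
  using quad_form_axis[of A i] unfolding psd_def by metis

lemma povm_diag_le_one:
  assumes "povm n Q" and "a < n"
  shows "Re (Q a $ i $ i) \<le> 1"
proof -
  have "(\<Sum>a<n. Q a) = mat 1"
    using assms(1) by (simp add: povm_def)
  then have "(\<Sum>a<n. Q a) $ i $ i = 1"
    by (simp add: mat_def)
  then have "(\<Sum>a<n. Re (Q a $ i $ i)) = 1"
    by (metis Re_sum one_complex.sel(1) sum_component)
  moreover have "Re (Q a $ i $ i) \<le> (\<Sum>a<n. Re (Q a $ i $ i))"
    using assms by (intro member_le_sum) (simp_all add: povm_def psd_diag_nonneg)
  ultimately show ?thesis by simp
qed

lemma povm_simulation:
  fixes Q :: "nat \<Rightarrow> nat \<Rightarrow> complex^'d^'d"
  assumes p0: "\<forall>x<K. 0 \<le> p x" and p1: "(\<Sum>x<K. p x) = 1"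
    and Q: "\<forall>x<K. povm n (Q x)"
    and q: "\<forall>x<K. \<forall>a<n. (\<forall>b<m. 0 \<le> q b a x) \<and> (\<Sum>b<m. q b a x) = 1"
  shows "povm m (\<lambda>b. \<Sum>x<K. \<Sum>a<n. (p x * q b a x) *\<^sub>R Q x a)"
  unfolding povm_def
proof (intro conjI allI impI)
  fix b assume "b < m"
  then show "psd (\<Sum>x<K. \<Sum>a<n. (p x * q b a x) *\<^sub>R Q x a)"
    using p0 Q q by (intro psd_sum psd_scaleR) (auto simp: povm_def)
next
  have "(\<Sum>b<m. \<Sum>x<K. \<Sum>a<n. (p x * q b a x) *\<^sub>R Q x a)
      = (\<Sum>x<K. \<Sum>a<n. (p x * (\<Sum>b<m. q b a x)) *\<^sub>R Q x a)"
    by (simp add: sum.swap[of _ "{..<m}"] sum_distrib_left scaleR_sum_left)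
  also have "\<dots> = (\<Sum>x<K. p x *\<^sub>R (\<Sum>a<n. Q x a))"
    using q by (intro sum.cong) (simp_all add: scaleR_sum_right)
  also have "\<dots> = (\<Sum>x<K. p x) *\<^sub>R mat 1"
    using Q by (simp add: povm_def scaleR_sum_left)
  finally show "(\<Sum>b<m. \<Sum>x<K. \<Sum>a<n. (p x * q b a x) *\<^sub>R Q x a) = mat 1"
    using p1 by simp
qed

lemma simulable_intro:
  fixes Q :: "nat \<Rightarrow> nat \<Rightarrow> complex^'d^'d"
  assumes "\<forall>x<K. 0 \<le> p x" and "(\<Sum>x<K. p x) = 1"
    and "\<forall>x<K. povm n (Q x)"
    and "\<forall>x<K. \<forall>a<n. (\<forall>b<m. 0 \<le> q b a x) \<and> (\<Sum>b<m. q b a x) = 1"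
    and Ob: "\<forall>b<m. Ob b = (\<Sum>x<K. \<Sum>a<n. (p x * q b a x) *\<^sub>R Q x a)"
  shows "simulable n m Ob"
proof -
  have "povm m Ob"
    using povm_simulation[OF assms(1-4)] Ob by (simp add: povm_def)
  then show ?thesis
    unfolding simulable_def using assms by blast
qed

lemma simulable_diag_sum_le:
  fixes Ob :: "nat \<Rightarrow> complex^'d^'d"
  assumes "simulable n m Ob"
  shows "(\<Sum>b<m. Re (Ob b $ e b $ e b)) \<le> real n"
proof -
  obtain K p q and Q :: "nat \<Rightarrow> nat \<Rightarrow> complex^'d^'d" where
    p0: "\<forall>x<K. 0 \<le> p x" and p1: "(\<Sum>x<K. p x) = 1"
    and Q: "\<forall>x<K. povm n (Q x)"
    and q: "\<forall>x<K. \<forall>a<n. (\<forall>b<m. 0 \<le> q b a x) \<and> (\<Sum>b<m. q b a x) = 1"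
    and Ob: "\<forall>b<m. Ob b = (\<Sum>x<K. \<Sum>a<n. (p x * q b a x) *\<^sub>R Q x a)"
    using assms unfolding simulable_def by blast
  have Q_diag: "0 \<le> Re (Q x a $ i $ i)" "Re (Q x a $ i $ i) \<le> 1" if "x < K" "a < n" for x a i
    using Q that povm_diag_le_one[of n "Q x"] by (auto simp: povm_def psd_diag_nonneg)
  have "(\<Sum>b<m. Re (Ob b $ e b $ e b))
      = (\<Sum>b<m. \<Sum>x<K. \<Sum>a<n. p x * q b a x * Re (Q x a $ e b $ e b))"
    using Ob by (intro sum.cong) (simp_all add: sum_component Re_sum)
  also have "\<dots> \<le> (\<Sum>b<m. \<Sum>x<K. \<Sum>a<n. p x * q b a x)"
    using p0 q Q_diag by (intro sum_mono mult_right_le_one_le mult_nonneg_nonneg) auto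
  also have "\<dots> = (\<Sum>x<K. \<Sum>a<n. p x * (\<Sum>b<m. q b a x))"
    by (simp add: sum.swap[of _ "{..<m}"] sum_distrib_left)
  also have "\<dots> = (\<Sum>x<K. \<Sum>a<n. p x)"
    using q by (intro sum.cong) simp_all
  also have "\<dots> = real n"
    using p1 by (simp flip: sum_distrib_left)
  finally show ?thesis .
qed

definition diag_mat :: "('d \<Rightarrow> real) \<Rightarrow> complex^'d^'d" where
  "diag_mat f = (\<chi> i j. if i = j then complex_of_real (f i) else 0)"

lemma quad_form_diag_mat: "quad_form (diag_mat f) v = of_real (\<Sum>i\<in>UNIV. f i * (norm (v $ i))\<^sup>2)"
proof -
  have "quad_form (diag_mat f) v = (\<Sum>i\<in>UNIV. of_real (f i) * (v $ i * cnj (v $ i)))"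
    by (simp add: quad_form_def matrix_vector_mult_def diag_mat_def if_distrib if_distribR mult_ac
        cong: if_cong)
  then show ?thesis
    by (simp flip: complex_norm_square)
qed

lemma psd_diag_mat: "(\<And>i. 0 \<le> f i) \<Longrightarrow> psd (diag_mat f)"
  unfolding psd_def hermitian_op_def quad_form_diag_mat
  by (simp add: diag_mat_def sum_nonneg)

lemma sum_diag_mat: "(\<Sum>b\<in>S. diag_mat (f b)) = diag_mat (\<lambda>i. \<Sum>b\<in>S. f b i)"
  by (induction S rule: infinite_finite_induct) (simp_all add: diag_mat_def vec_eq_iff)

lemma diag_mat_one: "diag_mat (\<lambda>_. 1) = mat 1"
  by (simp add: diag_mat_def mat_def vec_eq_iff)

lemma povm_diag_partition:
  assumes "\<forall>i. g i < m"
  shows "povm m (\<lambda>b. diag_mat (\<lambda>i. if g i = b then 1 else 0))"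
proof -
  have "(\<Sum>b<m. if g i = b then 1 else 0) = (1::real)" for i
    using assms by simp
  then show ?thesis
    by (simp add: povm_def psd_diag_mat sum_diag_mat diag_mat_one)
qed

lemma ex_povm_unit_diagonal:
  assumes "1 \<le> m" and "m \<le> CARD('d)"
  shows "\<exists>(M :: nat \<Rightarrow> complex^'d^'d) e. povm m M \<and> (\<forall>b<m. 1 \<le> Re (M b $ e b $ e b))"
proof -
  obtain e :: "nat \<Rightarrow> 'd" where e: "inj_on e {..<m}"
    using card_le_inj[of "{..<m}" "UNIV :: 'd set"] assms(2) by auto
  define g where "g i = (if i \<in> e ` {..<m} then inv_into {..<m} e i else 0)" for i
  have "\<forall>i. g i < m"
    using assms(1) e by (auto simp: g_def)
  moreover have "g (e b) = b" if "b < m" for b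
    using e that by (simp add: g_def)
  ultimately show ?thesis
    using povm_diag_partition[of g m]
    by (intro exI[of _ "\<lambda>b. diag_mat (\<lambda>i. if g i = b then 1 else 0)"] exI[of _ e])
      (simp add: diag_mat_def)
qed

lemma sum_shift_mod:
  assumes "0 < (m::nat)"
  shows "(\<Sum>x<m. f ((x + a) mod m)) = (\<Sum>x<m. f x)"
proof -
  have cancel: "(x + a + (m - a mod m)) mod m = x" if "x < m" for x a
  proof -
    have "a mod m \<le> a" "a mod m < m"
      using assms by simp_all
    then have "x + a + (m - a mod m) = x + m + (a - a mod m)"
      by linarith
    also have "\<dots> = x + m * (a div m + 1)"
      by (simp add: minus_mod_eq_mult_div algebra_simps)
    finally show ?thesis
      using that by (metis mod_less mod_mult_self2)
  qed
  have "bij_betw (\<lambda>x. (x + a) mod m) {..<m} {..<m}"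
  proof (rule bij_betw_byWitness[where f' = "\<lambda>y. (y + (m - a mod m)) mod m"])
    show "\<forall>x\<in>{..<m}. ((x + a) mod m + (m - a mod m)) mod m = x"
      by (metis cancel lessThan_iff mod_add_left_eq)
    have "((y + (m - a mod m)) mod m + a) mod m = (y + a + (m - a mod m)) mod m" for y
      by (simp only: mod_add_left_eq mod_add_right_eq ac_simps)
    then show "\<forall>y\<in>{..<m}. ((y + (m - a mod m)) mod m + a) mod m = y"
      by (metis cancel lessThan_iff)
  qed (use assms in auto)
  then show ?thesis
    by (rule sum.reindex_bij_betw)
qed

definition cyclic_tail :: "nat \<Rightarrow> nat \<Rightarrow> (nat \<Rightarrow> 'a::comm_monoid_add) \<Rightarrow> nat \<Rightarrow> 'a" where
  "cyclic_tail n m M x = (\<Sum>j\<in>{n..<m}. M ((x + j) mod m))"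

definition cyclic_coarsening ::
    "nat \<Rightarrow> nat \<Rightarrow> (nat \<Rightarrow> 'a::comm_monoid_add) \<Rightarrow> nat \<Rightarrow> nat \<Rightarrow> 'a" where
  "cyclic_coarsening n m M x a =
     M ((x + a) mod m) + (if a = 0 then cyclic_tail n m M x else 0)"

lemma sum_cyclic_coarsening:
  assumes "1 \<le> n" and "n \<le> m"
  shows "(\<Sum>a<n. cyclic_coarsening n m M x a) = (\<Sum>b<m. M b)"
proof -
  have "(\<Sum>a<n. cyclic_coarsening n m M x a) = (\<Sum>j<n. M ((x + j) mod m)) + cyclic_tail n m M x"
    using assms(1) by (simp add: cyclic_coarsening_def sum.distrib)
  also have "\<dots> = (\<Sum>j<m. M ((j + x) mod m))"
    using assms(2) unfolding cyclic_tail_def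
    by (simp add: atLeast0LessThan[symmetric] sum.atLeastLessThan_concat add.commute)
  also have "\<dots> = (\<Sum>b<m. M b)"
    using assms by (intro sum_shift_mod) simp
  finally show ?thesis .
qed

lemma sum_cyclic_tail:
  fixes M :: "nat \<Rightarrow> 'a::real_vector"
  assumes "0 < m"
  shows "(\<Sum>x<m. cyclic_tail n m M x) = real (m - n) *\<^sub>R (\<Sum>b<m. M b)"
proof -
  have "(\<Sum>x<m. cyclic_tail n m M x) = (\<Sum>j\<in>{n..<m}. \<Sum>x<m. M ((x + j) mod m))"
    unfolding cyclic_tail_def by (rule sum.swap)
  also have "\<dots> = (\<Sum>j\<in>{n..<m}. \<Sum>b<m. M b)"
    using assms by (simp add: sum_shift_mod)
  finally show ?thesis
    by (simp add: sum_constant_scaleR)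
qed

lemma povm_cyclic_coarsening:
  assumes "1 \<le> n" and "n \<le> m" and "povm m M"
  shows "povm n (cyclic_coarsening n m M x)"
proof -
  have "psd (M ((x + j) mod m))" for j
    using assms by (simp add: povm_def)
  then have "psd (cyclic_coarsening n m M x a)" for a
    by (simp add: cyclic_coarsening_def cyclic_tail_def psd_add psd_sum psd_zero)
  then show ?thesis
    using assms sum_cyclic_coarsening[of n m M x] by (simp add: povm_def)
qed

lemma povm_cyclic_average:
  assumes "n < m" and "povm m M"
  shows "povm m (\<lambda>b. (1 / real (m - n)) *\<^sub>R cyclic_tail n m M b)"
proof -
  have "psd (M ((x + j) mod m))" for x j
    using assms by (simp add: povm_def)
  then have "psd (cyclic_tail n m M b)" for b
    by (simp add: cyclic_tail_def psd_sum)
  moreover have "(\<Sum>b<m. cyclic_tail n m M b) = real (m - n) *\<^sub>R mat 1"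
    using assms sum_cyclic_tail[of m n M] by (simp add: povm_def)
  ultimately show ?thesis
    using assms(1) by (simp add: povm_def psd_scaleR flip: scaleR_sum_right)
qed

lemma cyclic_simulation_sum:
  fixes M :: "nat \<Rightarrow> 'a::real_vector"
  assumes "1 \<le> n" and "b < m"
  shows "(\<Sum>x<m. \<Sum>a<n. (if (x + a) mod m = b then 1 else 0) *\<^sub>R cyclic_coarsening n m M x a)
    = real n *\<^sub>R M b + cyclic_tail n m M b"
proof -
  have "(if (x + a) mod m = b then 1 else 0) *\<^sub>R cyclic_coarsening n m M x a
      = (if (x + a) mod m = b then M b else 0)
        + (if a = 0 then (if x mod m = b then cyclic_tail n m M x else 0) else 0)" for x a
    by (simp add: cyclic_coarsening_def)
  then have "(\<Sum>x<m. \<Sum>a<n. (if (x + a) mod m = b then 1 else 0) *\<^sub>R cyclic_coarsening n m M x a)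
      = (\<Sum>a<n. \<Sum>x<m. if (x + a) mod m = b then M b else 0)
        + (\<Sum>x<m. if x = b then cyclic_tail n m M x else 0)"
    using assms(1) by (simp add: sum.distrib sum.swap[of _ "{..<m}"] cong: if_cong)
  also have "\<dots> = real n *\<^sub>R M b + cyclic_tail n m M b"
    using assms sum_shift_mod[of m "\<lambda>y. if y = b then M b else 0"]
    by (simp add: sum_constant_scaleR)
  finally show ?thesis .
qed

lemma simulable_cyclic:
  assumes "1 \<le> n" and "n \<le> m" and "povm m M"
  shows "simulable n m (\<lambda>b. (real n / real m) *\<^sub>R M b + (1 / real m) *\<^sub>R cyclic_tail n m M b)"
proof (rule simulable_intro[where K = m and p = "\<lambda>_. 1 / real m"
      and q = "\<lambda>b a x. if (x + a) mod m = b then 1 else 0" and Q = "cyclic_coarsening n m M"])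
  show "\<forall>x<m. povm n (cyclic_coarsening n m M x)"
    using assms povm_cyclic_coarsening by blast
  show "\<forall>b<m. (real n / real m) *\<^sub>R M b + (1 / real m) *\<^sub>R cyclic_tail n m M b
      = (\<Sum>x<m. \<Sum>a<n. (1 / real m * (if (x + a) mod m = b then 1 else 0)) *\<^sub>R
          cyclic_coarsening n m M x a)" (is "\<forall>b<m. ?O b = ?S b")
  proof (intro allI impI)
    fix b assume "b < m"
    have "?S b = (1 / real m) *\<^sub>R (\<Sum>x<m. \<Sum>a<n.
        (if (x + a) mod m = b then 1 else 0) *\<^sub>R cyclic_coarsening n m M x a)"
      by (simp only: scaleR_scaleR[symmetric] scaleR_sum_right)
    also have "\<dots> = (1 / real m) *\<^sub>R (real n *\<^sub>R M b + cyclic_tail n m M b)"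
      using assms(1) \<open>b < m\<close> by (simp only: cyclic_simulation_sum)
    finally show "?O b = ?S b"
      by (simp add: scaleR_add_right)
  qed
qed (use assms in auto)

lemma ex_simulable_mixture:
  assumes "1 \<le> n" and "n \<le> m" and "povm m M"
  shows "\<exists>N. povm m N \<and>
    simulable n m (\<lambda>b. (real n / real m) *\<^sub>R M b + (1 - real n / real m) *\<^sub>R N b)"
proof (cases "n = m")
  case True
  then show ?thesis
    using assms simulable_cyclic[OF assms] by (intro exI[of _ M]) (simp add: cyclic_tail_def)
next
  case False
  then have "n < m" "(1 - real n / real m) * (1 / real (m - n)) = 1 / real m"
    using assms by (simp_all add: of_nat_diff field_simps)
  then show ?thesis
    using simulable_cyclic[OF assms] povm_cyclic_average[OF _ assms(3)]
    by (intro exI[of _ "\<lambda>b. (1 / real (m - n)) *\<^sub>R cyclic_tail n m M b"]) simp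
qed

lemma scaleR_mixture_eq:
  fixes x y :: "'a::real_vector"
  assumes "0 < c"
  shows "(1 / (1 + (1 / c - 1))) *\<^sub>R (x + (1 / c - 1) *\<^sub>R y) = c *\<^sub>R x + (1 - c) *\<^sub>R y"
  using assms by (simp add: scaleR_add_right algebra_simps)

lemma robustness_le:
  assumes "0 \<le> t" and "povm m N"
    and "simulable n m (\<lambda>b. (1 / (1 + t)) *\<^sub>R (M b + t *\<^sub>R N b))"
  shows "robustness n m M \<le> t"
  unfolding robustness_def using assms by (intro cInf_lower bdd_belowI[of _ 0]) auto

lemma le_robustness:
  assumes "\<exists>t N. 0 \<le> t \<and> povm m N \<and> simulable n m (\<lambda>b. (1 / (1 + t)) *\<^sub>R (M b + t *\<^sub>R N b))"
    and "\<And>t N. 0 \<le> t \<Longrightarrow> povm m N \<Longrightarrow>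
      simulable n m (\<lambda>b. (1 / (1 + t)) *\<^sub>R (M b + t *\<^sub>R N b)) \<Longrightarrow> s \<le> t"
  shows "s \<le> robustness n m M"
  unfolding robustness_def using assms by (intro cInf_greatest) auto

lemma feasible_ge_of_unit_diagonal:
  fixes M N :: "nat \<Rightarrow> complex^'d^'d"
  assumes "1 \<le> n" and "\<forall>b<m. 1 \<le> Re (M b $ e b $ e b)"
    and "0 \<le> t" and "povm m N"
    and "simulable n m (\<lambda>b. (1 / (1 + t)) *\<^sub>R (M b + t *\<^sub>R N b))"
  shows "real m / real n - 1 \<le> t"
proof -
  have "1 / (1 + t) \<le> Re (((1 / (1 + t)) *\<^sub>R (M b + t *\<^sub>R N b)) $ e b $ e b)" if "b < m" for b
  proof -
    have "0 \<le> Re (N b $ e b $ e b)"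
      using assms(4) that by (simp add: povm_def psd_diag_nonneg)
    then have "1 \<le> Re (M b $ e b $ e b) + t * Re (N b $ e b $ e b)"
      using assms(2,3) that by (simp add: add_increasing2)
    then show ?thesis
      using assms(3) by (simp add: divide_right_mono)
  qed
  then have "(\<Sum>b<m. 1 / (1 + t))
      \<le> (\<Sum>b<m. Re (((1 / (1 + t)) *\<^sub>R (M b + t *\<^sub>R N b)) $ e b $ e b))"
    by (intro sum_mono) simp
  also have "\<dots> \<le> real n"
    by (rule simulable_diag_sum_le[OF assms(5)])
  finally have "real m / (1 + t) \<le> real n"
    by simp
  then show ?thesis
    using assms(1,3) by (simp add: field_simps)
qed

theorem proposition1:
  fixes n m :: nat
  assumes "1 \<le> n" and "n \<le> m"
  shows "(\<forall>M :: nat \<Rightarrow> complex^'d^'d. povm m M \<longrightarrow>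
            1 + robustness n m M \<le> real m / real n)
       \<and> (CARD('d) \<ge> m \<longrightarrow>
            (\<exists>M :: nat \<Rightarrow> complex^'d^'d. povm m M \<and> 1 + robustness n m M = real m / real n))"
proof -
  define c where "c = real n / real m"
  define t where "t = 1 / c - 1"
  have c: "0 < c" and t: "0 \<le> t" "1 + t = real m / real n"
    using assms by (simp_all add: c_def t_def)
  have feasible: "\<exists>N. povm m N \<and> simulable n m (\<lambda>b. (1 / (1 + t)) *\<^sub>R (M b + t *\<^sub>R N b))"
    if "povm m M" for M :: "nat \<Rightarrow> complex^'d^'d"
    using ex_simulable_mixture[OF assms that]
    unfolding t_def scaleR_mixture_eq[OF c] by (simp only: c_def)
  have upper: "1 + robustness n m M \<le> real m / real n" if "povm m M" for M :: "nat \<Rightarrow> complex^'d^'d"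
    using feasible[OF that] robustness_le[OF t(1)] t(2) by force
  have "1 + robustness n m M = real m / real n"
    if "povm m M" and "\<forall>b<m. 1 \<le> Re (M b $ e b $ e b)" for M :: "nat \<Rightarrow> complex^'d^'d" and e
  proof -
    have "real m / real n - 1 \<le> robustness n m M"
      using feasible[OF that(1)] t(1) feasible_ge_of_unit_diagonal[OF assms(1) that(2)]
      by (intro le_robustness) blast+
    then show ?thesis
      using upper[OF that(1)] by simp
  qed
  then show ?thesis
    using upper ex_povm_unit_diagonal[of m, where 'd = 'd] assms by fastforce
qed

end
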